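(* There exist a Fuchsian group $\Gamma$ and two subsets $F_1, F_2 \subset \mathbb{H}$ with $\mu(F_1) \neq \mu(F_2)$ such that each $F \in \{F_1, F_2\}$ satisfies all of the following conditions: (i) $F$ is open; (ii) no two distinct points of $F$ are equivalent under $\Gamma$; (ii$'$) no point of $F$ is equivalent under $\Gamma$ to a different point of $\overline{F}$; (iii) for every $z \in \mathbb{H}$ there exists some $M \in \Gamma$ such that $Mz \in \overline{F}$; (iv) every neighbourhood of a boundary point of $F$ (boundary taken in $\mathbb{H}$) contains a point of $\mathbb{H} \setminus F$ that is equivalent under $\Gamma$ to a point of $F$; (v) there is no open set $G \subset \mathbb{H}$ with $G \supsetneq F$ such that no two distinct points of $G$ are equivalent under $\Gamma$.
   Context: $\mathbb{H} = \{ z \in \mathbb{C} : \mathrm{Im}\, z > 0\}$ is the upper half-plane; $\overline{F}$ denotes the closure of $F$ in $\mathbb{H}$. A Fuchsian group is a discrete subgroup $\Gamma$ of $\mathrm{PSL}_2(\mathbb{R})$, acting on $\mathbb{H}$ by $z \mapsto Mz = \frac{az+b}{cz+d}$ for $M = \pm\begin{pmatrix} a & b \\ c & d\end{pmatrix}$. Two points $z, w \in \mathbb{H}$ are equivalent under $\Gamma$ if $w = Mz$ for some $M \in \Gamma$. $\mu$ denotes the hyperbolic area measure on $\mathbb{H}$, $d\mu = y^{-2}\,dx\,dy$ (for $z = x+iy$). *)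

theory Defs
  imports "HOL-Analysis.Analysis"
begin

definition uhp :: "complex set" where
  "uhp = {z. Im z > 0}"

text \<open>Real 2x2 matrices (a,b,c,d) standing for [[a,b],[c,d]].\<close>
type_synonym mat2 = "real \<times> real \<times> real \<times> real"

definition SL2R :: "mat2 set" where
  "SL2R = {(a,b,c,d). a*d - b*c = 1}"

fun mat2_mult :: "mat2 \<Rightarrow> mat2 \<Rightarrow> mat2" where
  "mat2_mult (a,b,c,d) (a',b',c',d') =
     (a*a' + b*c', a*b' + b*d', c*a' + d*c', c*b' + d*d')"

fun mat2_inv :: "mat2 \<Rightarrow> mat2" where
  "mat2_inv (a,b,c,d) = (d, -b, -c, a)"

fun mat2_neg :: "mat2 \<Rightarrow> mat2" where
  "mat2_neg (a,b,c,d) = (-a, -b, -c, -d)"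

fun moeb :: "mat2 \<Rightarrow> complex \<Rightarrow> complex" where
  "moeb (a,b,c,d) z = (of_real a * z + of_real b) / (of_real c * z + of_real d)"

text \<open>A Fuchsian group, i.e. a discrete subgroup of PSL2(R), represented by its full
  preimage in SL2(R) (a subgroup of SL2(R) containing -I), which is discrete in SL2(R).\<close>
definition fuchsian :: "mat2 set \<Rightarrow> bool" where
  "fuchsian \<Gamma> \<longleftrightarrow>
     \<Gamma> \<subseteq> SL2R \<and> (1,0,0,1) \<in> \<Gamma> \<and>
     (\<forall>M\<in>\<Gamma>. \<forall>N\<in>\<Gamma>. mat2_mult M N \<in> \<Gamma>) \<and>
     (\<forall>M\<in>\<Gamma>. mat2_inv M \<in> \<Gamma>) \<and>
     (\<forall>M\<in>\<Gamma>. mat2_neg M \<in> \<Gamma>) \<and>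
     (\<forall>M\<in>\<Gamma>. \<exists>e>0. \<forall>N\<in>\<Gamma>. dist N M < e \<longrightarrow> N = M)"

definition gequiv :: "mat2 set \<Rightarrow> complex \<Rightarrow> complex \<Rightarrow> bool" where
  "gequiv \<Gamma> z w \<longleftrightarrow> (\<exists>M\<in>\<Gamma>. w = moeb M z)"

definition hyp_area :: "complex measure" where
  "hyp_area = density lborel (\<lambda>z. if Im z > 0 then ennreal (1 / (Im z)^2) else 0)"

definition hclosure :: "complex set \<Rightarrow> complex set" where
  "hclosure F = closure F \<inter> uhp"

definition no_equiv_pts :: "mat2 set \<Rightarrow> complex set \<Rightarrow> bool" where
  "no_equiv_pts \<Gamma> G \<longleftrightarrow> (\<forall>z\<in>G. \<forall>w\<in>G. z \<noteq> w \<longrightarrow> \<not> gequiv \<Gamma> z w)"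

definition fund_conditions :: "mat2 set \<Rightarrow> complex set \<Rightarrow> bool" where
  "fund_conditions \<Gamma> F \<longleftrightarrow>
     F \<subseteq> uhp \<and>
     open F \<and>
     no_equiv_pts \<Gamma> F \<and>
     (\<forall>z\<in>F. \<forall>w\<in>hclosure F. z \<noteq> w \<longrightarrow> \<not> gequiv \<Gamma> z w) \<and>
     (\<forall>z\<in>uhp. \<exists>M\<in>\<Gamma>. moeb M z \<in> hclosure F) \<and>
     (\<forall>w\<in>hclosure F - F. \<forall>U. open U \<and> w \<in> U \<longrightarrow>
         (\<exists>p\<in>U. p \<in> uhp - F \<and> (\<exists>q\<in>F. gequiv \<Gamma> q p))) \<and>
     \<not> (\<exists>G. open G \<and> G \<subseteq> uhp \<and> F \<subset> G \<and> no_equiv_pts \<Gamma> G)"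

end

theory Submission
  imports Defs "HOL-Probability.Sinc_Integral"
begin

(* Let \<Gamma> = {\<plusminus>I, \<plusminus>S} with S z = -1/z, an involution of the upper half-plane H. If Q \<subseteq> H is open,
   Q \<inter> S Q = {} and Q \<union> S Q is dense in H, then the regular open set F = int (cl Q) satisfies
   (i)-(v): its closure is cl Q, and S maps every point of H outside cl Q into F. These conditions
   are topological and do not control the boundary of F, which can carry infinite area.

   Q1 = {Re z > 0} gives a domain of infinite area. For the second domain put
   Q2 = {h (\<Phi> z) > 0}, where \<Phi>(x + iy) = x (1 + x\<^sup>2 + y\<^sup>2)\<^sup>2 / y\<^sup>3 is odd under S and stretches the
   horizontal line at height y by at least (1 + y\<^sup>2)\<^sup>2 / y\<^sup>3, and h(s) = s d(s) sin (1 / d(s)) with d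
   the distance to a symmetric closed nowhere dense set K, 0 \<notin> K, whose complement U (intervals of
   length 2^-k around the rationals) has finite length. As h takes negative values arbitrarily
   close to every point of K, F2 avoids \<Phi>\<inverse>(K), i.e. F2 \<subseteq> \<Phi>\<inverse>(U); by the stretching, the slice of
   \<Phi>\<inverse>(U) at height y has length at most 16 y\<^sup>3 / (1 + y\<^sup>2)\<^sup>2, so its hyperbolic area is finite. *)

section \<open>Fundamental domains of an involution\<close>

definition minus_recip :: "complex \<Rightarrow> complex" where
  "minus_recip z = - 1 / z"

definition minus_recip_group :: "mat2 set" where
  "minus_recip_group = {(1,0,0,1), (-1,0,0,-1), (0,-1,1,0), (0,1,-1,0)}"

lemma minus_recip_minus_recip [simp]: "minus_recip (minus_recip z) = z"
  by (cases "z = 0") (auto simp: minus_recip_def)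

lemma Re_minus_recip: "Re (minus_recip z) = - Re z / (cmod z)^2"
  by (simp add: minus_recip_def Re_divide cmod_power2)

lemma Im_minus_recip: "Im (minus_recip z) = Im z / (cmod z)^2"
  by (simp add: minus_recip_def Im_divide cmod_power2)

lemma minus_recip_in_uhp: "z \<in> uhp \<Longrightarrow> minus_recip z \<in> uhp"
  by (cases "z = 0") (auto simp: uhp_def Im_minus_recip)

lemma open_uhp: "open uhp"
  unfolding uhp_def by (rule open_halfspace_Im_gt)

lemma homeomorphism_minus_recip: "homeomorphism uhp uhp minus_recip minus_recip"
proof -
  have "minus_recip ` uhp = uhp"
    using minus_recip_in_uhp by (force intro: image_eqI[where x = "minus_recip _"])
  moreover have "continuous_on uhp minus_recip"
    unfolding minus_recip_def uhp_def by (auto intro!: continuous_intros)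
  ultimately show ?thesis
    by (simp add: homeomorphism_def)
qed

lemma gequiv_minus_recip_group: "gequiv minus_recip_group z w \<longleftrightarrow> w = z \<or> w = minus_recip z"
  unfolding gequiv_def minus_recip_group_def minus_recip_def by (auto simp: field_simps)

lemma fuchsian_minus_recip_group: "fuchsian minus_recip_group"
proof -
  have "\<exists>e>0. \<forall>N\<in>minus_recip_group. dist N M < e \<longrightarrow> N = M" for M
    using finite_set_avoid[of minus_recip_group M]
    by (auto simp: minus_recip_group_def dist_commute not_less[symmetric])
  then show ?thesis
    by (auto simp: fuchsian_def minus_recip_group_def SL2R_def)
qed

lemma closure_outside_closure_regular_open:
  assumes "F = uhp \<inter> interior (closure F)" "z \<in> uhp" "z \<notin> F"
  shows "z \<in> closure (uhp - closure F)"
proof (rule ccontr)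
  define U where "U = - closure (uhp - closure F)"
  assume "z \<notin> closure (uhp - closure F)"
  then have "z \<in> U \<inter> uhp" "open (U \<inter> uhp)"
    using assms(2) open_uhp by (auto simp: U_def)
  moreover have "U \<inter> uhp \<subseteq> closure F"
    using closure_subset[of "uhp - closure F"] by (auto simp: U_def)
  ultimately have "z \<in> interior (closure F)"
    using interior_maximal by blast
  with assms show False
    by blast
qed

lemma fund_conditions_regular_open:
  assumes orbits: "\<And>z w. gequiv \<Gamma> z w \<longleftrightarrow> w = z \<or> w = \<sigma> z"
    and involution: "\<And>z. z \<in> uhp \<Longrightarrow> \<sigma> (\<sigma> z) = z"
    and F: "F \<subseteq> uhp" "F = uhp \<inter> interior (closure F)"
    and disjoint: "\<And>z. z \<in> F \<Longrightarrow> \<sigma> z \<notin> closure F"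
    and cover: "\<And>z. z \<in> uhp \<Longrightarrow> z \<notin> closure F \<Longrightarrow> \<sigma> z \<in> F"
  shows "fund_conditions \<Gamma> F"
proof -
  have outside: "\<exists>p\<in>U. p \<in> uhp - closure F" if "z \<in> uhp" "z \<notin> F" "open U" "z \<in> U" for z U
    using closure_outside_closure_regular_open[OF F(2) that(1,2)] open_Int_closure_eq_empty[OF that(3)]
      that(4) by blast
  have "F \<subseteq> closure F"
    by (rule closure_subset)
  then have no_equiv: "no_equiv_pts \<Gamma> F"
    and no_equiv_closure: "\<forall>z\<in>F. \<forall>w\<in>hclosure F. z \<noteq> w \<longrightarrow> \<not> gequiv \<Gamma> z w"
    using disjoint by (auto simp: no_equiv_pts_def orbits hclosure_def)
  have cover_orbit: "\<forall>z\<in>uhp. \<exists>M\<in>\<Gamma>. moeb M z \<in> hclosure F"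
  proof
    fix z assume "z \<in> uhp"
    then have "z \<in> hclosure F \<or> \<sigma> z \<in> hclosure F"
      using cover F(1) closure_subset by (auto simp: hclosure_def)
    moreover have "gequiv \<Gamma> z z" "gequiv \<Gamma> z (\<sigma> z)"
      by (simp_all add: orbits)
    ultimately show "\<exists>M\<in>\<Gamma>. moeb M z \<in> hclosure F"
      unfolding gequiv_def by metis
  qed
  have boundary: "\<forall>w\<in>hclosure F - F. \<forall>U. open U \<and> w \<in> U \<longrightarrow>
      (\<exists>p\<in>U. p \<in> uhp - F \<and> (\<exists>q\<in>F. gequiv \<Gamma> q p))"
  proof (intro ballI allI impI)
    fix w U assume w: "w \<in> hclosure F - F" "open U \<and> w \<in> U"
    then obtain p where p: "p \<in> U" "p \<in> uhp" "p \<notin> closure F"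
      using outside[of w U] by (auto simp: hclosure_def)
    then have "\<sigma> p \<in> F" "gequiv \<Gamma> (\<sigma> p) p"
      using cover involution by (auto simp: orbits)
    with p show "\<exists>p\<in>U. p \<in> uhp - F \<and> (\<exists>q\<in>F. gequiv \<Gamma> q p)"
      using closure_subset by blast
  qed
  have not_extendable: "\<not> (\<exists>G. open G \<and> G \<subseteq> uhp \<and> F \<subset> G \<and> no_equiv_pts \<Gamma> G)"
  proof
    assume "\<exists>G. open G \<and> G \<subseteq> uhp \<and> F \<subset> G \<and> no_equiv_pts \<Gamma> G"
    then obtain G g where G: "open G" "G \<subseteq> uhp" "F \<subset> G" "no_equiv_pts \<Gamma> G" and "g \<in> G - F"
      by blast
    then obtain p where p: "p \<in> G" "p \<in> uhp" "p \<notin> closure F"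
      using outside[of g G] by blast
    then have "\<sigma> p \<in> F"
      using cover by blast
    then have "\<sigma> p \<in> G" "\<sigma> p \<noteq> p"
      using G(3) p(3) closure_subset by (blast, metis subsetD)
    with p G(4) show False
      unfolding no_equiv_pts_def orbits by blast
  qed
  have "open F"
    using open_uhp by (subst F(2)) auto
  then show ?thesis
    unfolding fund_conditions_def
    using F(1) no_equiv no_equiv_closure cover_orbit boundary not_extendable by blast
qed

lemma homeomorphism_uhp_open_image:
  "homeomorphism uhp uhp \<sigma> \<sigma>' \<Longrightarrow> open W \<Longrightarrow> W \<subseteq> uhp \<Longrightarrow> open (\<sigma> ` W)"
  using homeomorphism_imp_open_map[of uhp uhp \<sigma> \<sigma>' W] open_uhp by (simp add: openin_open_eq)

lemma image_interior_closure_disjoint_closure: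
  assumes hom: "homeomorphism uhp uhp \<sigma> \<sigma>"
    and Q: "open Q" "Q \<subseteq> uhp" "Q \<inter> \<sigma> ` Q = {}"
    and z: "z \<in> uhp \<inter> interior (closure Q)"
  shows "\<sigma> z \<notin> closure Q"
proof
  define F where "F = uhp \<inter> interior (closure Q)"
  assume "\<sigma> z \<in> closure Q"
  moreover have "open (\<sigma> ` F)"
    using homeomorphism_uhp_open_image[OF hom] open_uhp by (simp add: F_def open_Int)
  ultimately have "\<sigma> ` F \<inter> Q \<noteq> {}"
    using open_Int_closure_eq_empty[of "\<sigma> ` F" Q] z by (auto simp: F_def)
  then obtain f where f: "f \<in> F" "\<sigma> f \<in> Q"
    by blast
  then have "f \<in> \<sigma> ` Q"
    using hom by (force simp: F_def homeomorphism_def)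
  moreover have "\<sigma> ` Q \<inter> closure Q = {}"
    using open_Int_closure_eq_empty homeomorphism_uhp_open_image[OF hom Q(1,2)] Q(3) by blast
  moreover have "f \<in> closure Q"
    using f(1) interior_subset by (auto simp: F_def)
  ultimately show False
    by blast
qed

lemma image_outside_closure_subset_interior_closure:
  assumes hom: "homeomorphism uhp uhp \<sigma> \<sigma>"
    and Q: "Q \<subseteq> uhp" "uhp \<subseteq> closure (Q \<union> \<sigma> ` Q)"
  shows "\<sigma> ` (uhp - closure Q) \<subseteq> uhp \<inter> interior (closure Q)"
proof -
  define W where "W = uhp - closure Q"
  have W: "open W" "W \<subseteq> uhp" "W \<inter> Q = {}"
    using open_uhp closure_subset by (auto simp: W_def)
  have involution: "\<And>z. z \<in> uhp \<Longrightarrow> \<sigma> (\<sigma> z) = z" and "\<sigma> ` W \<subseteq> uhp"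
    using hom W(2) by (auto simp: homeomorphism_def)
  have "open (\<sigma> ` W)"
    using homeomorphism_uhp_open_image[OF hom W(1,2)] .
  moreover have "\<sigma> ` W \<subseteq> closure Q"
  proof (rule ccontr)
    assume "\<not> \<sigma> ` W \<subseteq> closure Q"
    then obtain v where v: "v \<in> \<sigma> ` W - closure Q"
      by blast
    then have "v \<in> closure (Q \<union> \<sigma> ` Q)"
      using Q(2) \<open>\<sigma> ` W \<subseteq> uhp\<close> by blast
    then obtain u where "u \<in> \<sigma> ` W" "u \<in> \<sigma> ` Q"
      using open_Int_closure_eq_empty[of "\<sigma> ` W - closure Q" "Q \<union> \<sigma> ` Q"] \<open>open (\<sigma> ` W)\<close> v
        closure_subset by blast
    then obtain w q where "w \<in> W" "q \<in> Q" "\<sigma> w = \<sigma> q"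
      by blast
    then have "w = q"
      using involution W(2) Q(1) by (metis subsetD)
    with \<open>w \<in> W\<close> \<open>q \<in> Q\<close> W(3) show False
      by blast
  qed
  ultimately have "\<sigma> ` W \<subseteq> interior (closure Q)"
    by (rule interior_maximal[rotated])
  with \<open>\<sigma> ` W \<subseteq> uhp\<close> show ?thesis
    by (auto simp: W_def)
qed

lemma fund_conditions_interior_closure:
  assumes orbits: "\<And>z w. gequiv \<Gamma> z w \<longleftrightarrow> w = z \<or> w = \<sigma> z"
    and hom: "homeomorphism uhp uhp \<sigma> \<sigma>"
    and Q: "open Q" "Q \<subseteq> uhp" "Q \<inter> \<sigma> ` Q = {}" "uhp \<subseteq> closure (Q \<union> \<sigma> ` Q)"
  shows "fund_conditions \<Gamma> (uhp \<inter> interior (closure Q))"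
proof -
  define F where "F = uhp \<inter> interior (closure Q)"
  have "Q \<subseteq> F"
    using Q(2) interior_maximal[OF closure_subset Q(1)] by (auto simp: F_def)
  moreover have "F \<subseteq> closure Q"
    using interior_subset by (auto simp: F_def)
  ultimately have closure_F: "closure F = closure Q"
    by (metis closure_closure closure_mono subset_antisym)
  have "F = uhp \<inter> interior (closure F)"
    by (subst closure_F) (simp add: F_def)
  moreover have "\<sigma> z \<notin> closure F" if "z \<in> F" for z
    unfolding closure_F using image_interior_closure_disjoint_closure[OF hom Q(1-3)] that
    by (simp add: F_def)
  moreover have "\<sigma> z \<in> F" if "z \<in> uhp" "z \<notin> closure F" for z
    using image_outside_closure_subset_interior_closure[OF hom Q(2,4)] that
    unfolding closure_F by (auto simp: F_def)
  moreover have "\<sigma> (\<sigma> z) = z" if "z \<in> uhp" for z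
    using hom that by (simp add: homeomorphism_def)
  ultimately show ?thesis
    using fund_conditions_regular_open[OF orbits, of F] by (auto simp: F_def)
qed

lemma fund_conditions_sign_change:
  fixes H :: "complex \<Rightarrow> real"
  assumes cont: "continuous_on uhp H"
    and sign: "\<And>z. z \<in> uhp \<Longrightarrow> H (minus_recip z) < 0 \<longleftrightarrow> H z > 0"
    and dense: "uhp \<subseteq> closure {z \<in> uhp. H z \<noteq> 0}"
  shows "fund_conditions minus_recip_group (uhp \<inter> interior (closure {z \<in> uhp. H z > 0}))"
proof (rule fund_conditions_interior_closure[OF gequiv_minus_recip_group homeomorphism_minus_recip])
  show "open {z \<in> uhp. H z > 0}"
    using continuous_open_preimage[OF cont open_uhp, of "{0<..}"] by (simp add: vimage_def Int_def)
  have "minus_recip ` {z \<in> uhp. H z > 0} = {z \<in> uhp. H z < 0}"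
  proof
    show "minus_recip ` {z \<in> uhp. H z > 0} \<subseteq> {z \<in> uhp. H z < 0}"
      using sign minus_recip_in_uhp by auto
    show "{z \<in> uhp. H z < 0} \<subseteq> minus_recip ` {z \<in> uhp. H z > 0}"
    proof
      fix w assume "w \<in> {z \<in> uhp. H z < 0}"
      then have "minus_recip w \<in> {z \<in> uhp. H z > 0}"
        using sign[of "minus_recip w"] minus_recip_in_uhp by auto
      then show "w \<in> minus_recip ` {z \<in> uhp. H z > 0}"
        by (metis image_eqI minus_recip_minus_recip)
    qed
  qed
  moreover have "{z \<in> uhp. H z > 0} \<union> {z \<in> uhp. H z < 0} = {z \<in> uhp. H z \<noteq> 0}"
    by auto
  ultimately show "{z \<in> uhp. H z > 0} \<inter> minus_recip ` {z \<in> uhp. H z > 0} = {}"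
    and "uhp \<subseteq> closure ({z \<in> uhp. H z > 0} \<union> minus_recip ` {z \<in> uhp. H z > 0})"
    using dense by auto
qed auto

lemma fund_conditions_right_half:
  "fund_conditions minus_recip_group (uhp \<inter> interior (closure {z \<in> uhp. Re z > 0}))"
proof (rule fund_conditions_sign_change)
  show "continuous_on uhp Re"
    by (intro continuous_intros)
  show "Re (minus_recip z) < 0 \<longleftrightarrow> Re z > 0" if "z \<in> uhp" for z
    using that by (auto simp: Re_minus_recip uhp_def divide_neg_pos zero_less_divide_iff)
  show "uhp \<subseteq> closure {z \<in> uhp. Re z \<noteq> 0}"
  proof
    fix z assume z: "z \<in> uhp"
    show "z \<in> closure {z \<in> uhp. Re z \<noteq> 0}"
    proof (cases "Re z = 0")
      case True
      define u where "u n = z + of_real (1 / Suc n)" for n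
      have "u \<longlonglongrightarrow> z + of_real 0"
        unfolding u_def by (intro tendsto_intros LIMSEQ_Suc lim_inverse_n')
      moreover have "u n \<in> {z \<in> uhp. Re z \<noteq> 0}" for n
        using z True by (simp add: u_def uhp_def)
      ultimately show ?thesis
        unfolding closure_sequential by auto
    qed (use z closure_subset[of "{z \<in> uhp. Re z \<noteq> 0}"] in blast)
  qed
qed

section \<open>An odd function oscillating near a nowhere dense set\<close>

definition osc_infdist :: "real set \<Rightarrow> real \<Rightarrow> real" where
  "osc_infdist K s = s * (infdist s K * sin (1 / infdist s K))"

lemma isCont_mult_sin_inverse: "isCont (\<lambda>v::real. v * sin (1 / v)) v"
proof (cases "v = 0")
  case True
  have "\<forall>u::real. norm (u * sin (1 / u)) \<le> \<bar>u\<bar>"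
    using abs_sin_le_one by (simp add: abs_mult mult_left_le)
  moreover have "((\<lambda>u::real. \<bar>u\<bar>) \<longlongrightarrow> 0) (at 0)"
    using tendsto_rabs[OF tendsto_ident_at[of 0 UNIV]] by simp
  ultimately have "((\<lambda>u::real. u * sin (1 / u)) \<longlongrightarrow> 0) (at 0)"
    by (rule Lim_null_comparison[OF always_eventually])
  with True show ?thesis
    by (simp add: isCont_def)
qed (auto intro!: continuous_intros)

lemma isCont_osc_infdist: "isCont (osc_infdist K) s"
proof -
  have "isCont (\<lambda>s. infdist s K) s"
    by (intro continuous_infdist continuous_ident)
  then have "isCont (\<lambda>s. infdist s K * sin (1 / infdist s K)) s"
    using isCont_o2 isCont_mult_sin_inverse by blast
  then show ?thesis
    unfolding osc_infdist_def by (rule isCont_mult[OF continuous_ident])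
qed

lemma infdist_uminus: "infdist (- x) (uminus ` A) = infdist (x::real) A"
  by (cases "A = {}") (simp_all add: infdist_def image_image dist_minus)

lemma osc_infdist_uminus: "uminus ` K = K \<Longrightarrow> osc_infdist K (- s) = - osc_infdist K s"
  using infdist_uminus[of s K] by (simp add: osc_infdist_def)

lemma infdist_intermediate_value:
  fixes K :: "real set"
  assumes "closed K" "K \<noteq> {}" "0 \<le> v" "v \<le> infdist c K"
  obtains x where "\<bar>x - c\<bar> = infdist c K - v" "infdist x K = v"
proof -
  obtain a where a: "a \<in> K" "infdist c K = dist c a"
    using infdist_attains_inf[OF assms(1,2)] by blast
  define x where "x = c + (infdist c K - v) * sgn (a - c)"
  have x: "\<bar>x - c\<bar> = infdist c K - v" "dist x a = v"
    using a assms(3,4) by (auto simp: x_def dist_real_def sgn_if)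
  have "infdist x K \<le> v"
    using infdist_le[OF a(1), of x] x(2) by simp
  moreover have "infdist c K \<le> infdist x K + dist c x"
    by (rule infdist_triangle)
  ultimately show ?thesis
    using x(1) by (intro that[of x]) (auto simp: dist_real_def)
qed

lemma sin_inverse_eq_sin:
  fixes d \<theta> :: real
  assumes "d > 0" "\<theta> \<ge> 0"
  obtains v where "0 < v" "v \<le> d" "sin (1 / v) = sin \<theta>"
proof -
  define m :: nat where "m = nat \<lceil>1 / d\<rceil>"
  define D where "D = \<theta> + 2 * real m * pi"
  have "1 / d \<le> real m"
    unfolding m_def by linarith
  also have "\<dots> \<le> D"
    using mult_left_mono[of 1 "2 * pi" "real m"] pi_ge_two assms(2) by (simp add: D_def)
  finally have "1 / d \<le> D" .
  moreover have "0 < 1 / d"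
    using assms(1) by simp
  ultimately have "0 < D"
    by linarith
  have "1 / D \<le> 1 / (1 / d)"
    using \<open>1 / d \<le> D\<close> \<open>0 < 1 / d\<close> \<open>0 < D\<close> by (intro divide_left_mono) auto
  moreover have "sin D = sin \<theta>"
    by (simp add: D_def sin_add)
  ultimately show ?thesis
    using \<open>0 < D\<close> by (intro that[of "1 / D"]) auto
qed

lemma sin_inverse_eq_neg_sgn:
  fixes d s :: real
  assumes "d > 0" "s \<noteq> 0"
  obtains v where "0 < v" "v \<le> d" "sin (1 / v) = - sgn s"
proof (cases "s > 0")
  case True
  have "sin (3 * pi / 2) = - 1"
    using sin_periodic_pi[of "pi / 2"] by (simp add: add_divide_distrib)
  with True show ?thesis
    using sin_inverse_eq_sin[of d "3 * pi / 2"] assms(1) that by auto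
next
  case False
  with assms(2) show ?thesis
    using sin_inverse_eq_sin[of d "pi / 2"] assms(1) that by auto
qed

lemma sin_inverse_nonzero_near:
  fixes d \<delta> :: real
  assumes "d > 0" "\<delta> > 0"
  obtains v where "0 < v" "v \<le> d" "d - v < \<delta>" "sin (1 / v) \<noteq> 0"
proof (cases "sin (1 / d) = 0")
  case False
  then show ?thesis
    using assms by (intro that[of d]) auto
next
  case True
  define \<eta> where "\<eta> = min (pi / 2) (\<delta> / (2 * d^2))"
  have \<eta>: "0 < \<eta>" "\<eta> < pi" "d^2 * \<eta> < \<delta>"
    using assms by (auto simp: \<eta>_def min_def field_simps)
  define v where "v = d / (1 + d * \<eta>)"
  have "0 < 1 + d * \<eta>"
    using assms \<eta> by (simp add: add_pos_pos)
  have v: "1 / v = 1 / d + \<eta>"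
    using assms \<eta> by (simp add: v_def field_simps)
  have "cos (1 / d) \<noteq> 0"
    using True sin_cos_squared_add[of "1 / d"] by auto
  then have "sin (1 / v) \<noteq> 0"
    using True sin_gt_zero[OF \<eta>(1,2)] by (simp add: v sin_add)
  moreover have "d - v = d^2 * \<eta> / (1 + d * \<eta>)"
    using \<open>0 < 1 + d * \<eta>\<close> by (simp add: v_def field_simps power2_eq_square)
  moreover have "d^2 * \<eta> / (1 + d * \<eta>) \<le> d^2 * \<eta>"
    using assms \<eta> by (simp add: divide_le_eq)
  moreover have "0 < v" "v \<le> d"
    using assms \<open>0 < 1 + d * \<eta>\<close> \<eta> by (auto simp: v_def field_simps)
  ultimately show ?thesis
    using \<eta> by (intro that[of v]) auto
qed

lemma closure_osc_infdist_nonzero: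
  fixes K :: "real set"
  assumes K: "closed K" "K \<noteq> {}" "interior K = {}"
  shows "closure {s. osc_infdist K s \<noteq> 0} = UNIV"
proof -
  have "interior (K \<union> {0}) = {}"
    using interior_closed_Un_empty_interior[OF K(1), of "{0}"] K(3) by simp
  have "s \<in> closure {s. osc_infdist K s \<noteq> 0}" for s
    unfolding closure_approachable
  proof (intro allI impI)
    fix e :: real assume "e > 0"
    have "\<not> ball s (e / 2) \<subseteq> K \<union> {0}"
      using \<open>interior (K \<union> {0}) = {}\<close> \<open>e > 0\<close> interior_maximal[OF _ open_ball, of s "e / 2" "K \<union> {0}"]
      by (metis centre_in_ball empty_iff half_gt_zero subsetD)
    then obtain c where "c \<in> ball s (e / 2)" "c \<notin> K \<union> {0}"
      by blast
    then have c: "dist s c < e / 2" "c \<notin> K" "c \<noteq> 0"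
      by auto
    have "infdist c K > 0"
      using infdist_pos_not_in_closed K c by blast
    then obtain v where v: "0 < v" "v \<le> infdist c K" "infdist c K - v < min \<bar>c\<bar> (e / 2)"
      "sin (1 / v) \<noteq> 0"
      using sin_inverse_nonzero_near[of "infdist c K" "min \<bar>c\<bar> (e / 2)"] c \<open>e > 0\<close> by auto
    obtain x where x: "\<bar>x - c\<bar> = infdist c K - v" "infdist x K = v"
      using infdist_intermediate_value[OF K(1,2), of v c] v by auto
    have "x \<noteq> 0"
      using x v c by auto
    moreover have "dist x s < e"
      using dist_triangle[of x s c] x(1) v(3) c(1) by (simp add: dist_real_def abs_minus_commute)
    ultimately show "\<exists>y\<in>{s. osc_infdist K s \<noteq> 0}. dist y s < e"
      using x v
      by (auto simp: osc_infdist_def)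
  qed
  then show ?thesis
    by auto
qed

lemma subset_closure_osc_infdist_neg:
  fixes K :: "real set"
  assumes K: "closed K" "interior K = {}" "0 \<notin> K"
  shows "K \<subseteq> closure {s. osc_infdist K s < 0}"
proof
  fix s assume "s \<in> K"
  then have "K \<noteq> {}" "s \<noteq> 0"
    using K(3) by auto
  show "s \<in> closure {s. osc_infdist K s < 0}"
    unfolding closure_approachable
  proof (intro allI impI)
    fix e :: real assume "e > 0"
    define \<epsilon> where "\<epsilon> = min e \<bar>s\<bar> / 2"
    have "\<epsilon> > 0"
      using \<open>e > 0\<close> \<open>s \<noteq> 0\<close> by (simp add: \<epsilon>_def)
    then have "\<not> ball s \<epsilon> \<subseteq> K"
      using K(2) interior_maximal[OF _ open_ball, of s \<epsilon> K] by (metis centre_in_ball empty_iff subsetD)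
    then obtain c where c: "dist s c < \<epsilon>" "c \<notin> K"
      by (auto simp: subset_eq)
    have "0 < infdist c K" "infdist c K \<le> dist c s"
      using infdist_pos_not_in_closed[OF K(1) \<open>K \<noteq> {}\<close> c(2)] infdist_le[OF \<open>s \<in> K\<close>] by auto
    obtain v where v: "0 < v" "v \<le> infdist c K" "sin (1 / v) = - sgn s"
      using sin_inverse_eq_neg_sgn[OF \<open>0 < infdist c K\<close> \<open>s \<noteq> 0\<close>] by blast
    obtain x where x: "\<bar>x - c\<bar> = infdist c K - v" "infdist x K = v"
      using infdist_intermediate_value[OF K(1) \<open>K \<noteq> {}\<close>, of v c] v by auto
    have "\<bar>x - s\<bar> < 2 * \<epsilon>"
      using dist_triangle[of x s c] x(1) v \<open>infdist c K \<le> dist c s\<close> c(1)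
      by (simp add: dist_real_def abs_minus_commute)
    then have "dist x s < e" "sgn x = sgn s"
      by (auto simp: \<epsilon>_def dist_real_def sgn_if)
    moreover have "osc_infdist K x < 0"
    proof -
      have "osc_infdist K x = - (x * sgn x) * v"
        using x(2) v(3) \<open>sgn x = sgn s\<close> by (simp add: osc_infdist_def)
      moreover have "0 < x * sgn x"
        using \<open>sgn x = sgn s\<close> \<open>s \<noteq> 0\<close> by (auto simp: sgn_if split: if_splits)
      ultimately show ?thesis
        using v(1) by simp
    qed
    ultimately show "\<exists>y\<in>{s. osc_infdist K s < 0}. dist y s < e"
      by blast
  qed
qed

section \<open>Expanding maps and a thin dense open set\<close>

definition expanding :: "real \<Rightarrow> (real \<Rightarrow> real) \<Rightarrow> bool" where
  "expanding L f \<longleftrightarrow> (\<forall>a b. a \<le> b \<longrightarrow> L * (b - a) \<le> f b - f a)"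

lemma expanding_dist: "expanding L f \<Longrightarrow> L * dist a b \<le> dist (f a) (f b)"
  unfolding expanding_def dist_real_def
  by (cases "a \<le> b") (force simp: abs_if, smt (verit, best))

lemma expanding_ball_subset_image:
  assumes f: "expanding L f" "continuous_on UNIV f" and "0 \<le> \<eta>"
  shows "ball (f x) (L * \<eta>) \<subseteq> f ` cball x \<eta>"
proof
  fix t assume "t \<in> ball (f x) (L * \<eta>)"
  moreover have "L * (x - (x - \<eta>)) \<le> f x - f (x - \<eta>)" "L * (x + \<eta> - x) \<le> f (x + \<eta>) - f x"
    using f(1) \<open>0 \<le> \<eta>\<close> unfolding expanding_def by (metis diff_le_eq le_add_same_cancel1)+
  ultimately have "f (x - \<eta>) \<le> t" "t \<le> f (x + \<eta>)"
    by (auto simp: dist_real_def)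
  then obtain x' where "x - \<eta> \<le> x'" "x' \<le> x + \<eta>" "f x' = t"
    using IVT'[of f "x - \<eta>" t "x + \<eta>"] continuous_on_subset[OF f(2)] \<open>0 \<le> \<eta>\<close> by auto
  then show "t \<in> f ` cball x \<eta>"
    by (auto simp: dist_real_def)
qed

lemma emeasure_expanding_vimage_ball:
  assumes "expanding L f" "L > 0"
  shows "emeasure lborel (f -` ball c r) \<le> ennreal (4 * r / L)"
proof (cases "f -` ball c r = {}")
  case False
  then obtain a where a: "f a \<in> ball c r"
    by blast
  then have "0 < r"
    by (metis mem_ball zero_le_dist le_less_trans)
  have "f -` ball c r \<subseteq> {a - 2 * r / L .. a + 2 * r / L}"
  proof
    fix b assume "b \<in> f -` ball c r"
    then have "dist (f b) (f a) < 2 * r"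
      using a dist_triangle[of "f b" "f a" c] by (simp add: dist_commute)
    then have "L * dist b a < 2 * r"
      using expanding_dist[OF assms(1), of b a] by linarith
    then have "dist b a < 2 * r / L"
      using assms(2) by (simp add: pos_less_divide_eq mult.commute)
    then show "b \<in> {a - 2 * r / L .. a + 2 * r / L}"
      by (auto simp: dist_real_def abs_less_iff)
  qed
  then have "emeasure lborel (f -` ball c r) \<le> emeasure lborel {a - 2 * r / L .. a + 2 * r / L}"
    by (intro emeasure_mono) auto
  also have "\<dots> = ennreal ((a + 2 * r / L) - (a - 2 * r / L))"
    using assms(2) \<open>0 < r\<close> by (intro emeasure_lborel_Icc) simp
  also have "\<dots> = ennreal (4 * r / L)"
    by (simp add: field_simps)
  finally show ?thesis .
qed simp

definition sym_rat_cover :: "real set" where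
  "sym_rat_cover = (\<Union>k. ball (of_rat (from_nat k)) ((1/2)^k) \<union> ball (- of_rat (from_nat k)) ((1/2)^k))"

lemma open_sym_rat_cover: "open sym_rat_cover"
  unfolding sym_rat_cover_def by auto

lemma uminus_sym_rat_cover: "uminus ` sym_rat_cover = sym_rat_cover"
proof -
  have ball_uminus: "- x \<in> ball (- c) r \<longleftrightarrow> x \<in> ball c r" for x c r :: real
    by (simp add: dist_minus)
  have "- x \<in> sym_rat_cover" if "x \<in> sym_rat_cover" for x
    using that ball_uminus[of x] ball_uminus[of x "- _"] unfolding sym_rat_cover_def by auto
  then show ?thesis
    by (auto intro: image_eqI[where x = "- _"])
qed

lemma Rats_subset_sym_rat_cover: "\<rat> \<subseteq> sym_rat_cover"
proof
  fix x :: real assume "x \<in> \<rat>"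
  then obtain q where "x = of_rat q"
    by (auto elim: Rats_cases)
  then have "x \<in> ball (of_rat (from_nat (to_nat q))) ((1/2)^to_nat q)"
    by simp
  then show "x \<in> sym_rat_cover"
    unfolding sym_rat_cover_def by blast
qed

lemma emeasure_expanding_vimage_sym_rat_cover:
  assumes "expanding L f" "L > 0" "continuous_on UNIV f"
  shows "emeasure lborel (f -` sym_rat_cover) \<le> ennreal (16 / L)"
proof -
  define B where "B k = f -` ball (of_rat (from_nat k)) ((1/2)^k) \<union> f -` ball (- of_rat (from_nat k)) ((1/2)^k)" for k
  have "f -` sym_rat_cover = (\<Union>k. B k)"
    by (auto simp: sym_rat_cover_def B_def)
  moreover have "range B \<subseteq> sets lborel"
  proof -
    have "open (B k)" for k
      unfolding B_def using open_vimage[OF open_ball assms(3)] by blast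
    then show ?thesis
      by auto
  qed
  ultimately have "emeasure lborel (f -` sym_rat_cover) \<le> (\<Sum>k. emeasure lborel (B k))"
    by (simp add: emeasure_subadditive_countably)
  also have "\<dots> \<le> (\<Sum>k. ennreal (8 / L * (1/2)^k))"
  proof (intro suminf_le allI)
    fix k
    define r :: real where "r = (1/2)^k"
    have "emeasure lborel (B k) \<le> emeasure lborel (f -` ball (of_rat (from_nat k)) r)
        + emeasure lborel (f -` ball (- of_rat (from_nat k)) r)"
      unfolding B_def r_def using open_vimage[OF _ assms(3)] by (intro emeasure_subadditive) auto
    also have "\<dots> \<le> ennreal (4 * r / L) + ennreal (4 * r / L)"
      by (intro add_mono emeasure_expanding_vimage_ball assms(1,2))
    also have "\<dots> = ennreal (8 / L * (1/2)^k)"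
      using assms(2) by (simp add: r_def flip: ennreal_plus)
    finally show "emeasure lborel (B k) \<le> ennreal (8 / L * (1/2)^k)" .
  qed auto
  also have "\<dots> = ennreal (16 / L)"
  proof -
    have "(\<lambda>k. 8 / L * (1/2)^k) sums (8 / L * (1 / (1 - 1/2)))"
      by (intro sums_mult geometric_sums) simp
    then show ?thesis
      using assms(2) by (subst suminf_ennreal_eq) auto
  qed
  finally show ?thesis .
qed

lemma expanding_id: "expanding 1 id"
  by (simp add: expanding_def)

lemma compl_sym_rat_cover:
  "closed (- sym_rat_cover)" "- sym_rat_cover \<noteq> {}" "interior (- sym_rat_cover) = {}"
  "0 \<notin> - sym_rat_cover" "uminus ` (- sym_rat_cover) = - sym_rat_cover"
proof -
  show "closed (- sym_rat_cover)"
    using open_sym_rat_cover by auto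
  have "emeasure lborel sym_rat_cover \<le> ennreal 16"
    using emeasure_expanding_vimage_sym_rat_cover[OF expanding_id] by simp
  then have "sym_rat_cover \<noteq> UNIV"
    by (auto simp: top_unique)
  then show "- sym_rat_cover \<noteq> {}"
    by auto
  have "closure sym_rat_cover = UNIV"
    using closure_mono[OF Rats_subset_sym_rat_cover] Rats_closure_real by auto
  then show "interior (- sym_rat_cover) = {}"
    by (simp add: interior_complement)
  show "0 \<notin> - sym_rat_cover"
    using Rats_subset_sym_rat_cover by auto
  show "uminus ` (- sym_rat_cover) = - sym_rat_cover"
    using uminus_sym_rat_cover by (metis bij_image_Compl_eq bij_uminus)
qed

definition Phi :: "complex \<Rightarrow> real" where
  "Phi z = Re z * (1 + (cmod z)^2)^2 / (Im z)^3"

lemma Phi_Complex: "Phi (Complex x y) = x * (1 + x^2 + y^2)^2 / y^3"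
  by (simp add: Phi_def cmod_power2 add.assoc)

lemma Phi_minus_recip: "z \<in> uhp \<Longrightarrow> Phi (minus_recip z) = - Phi z"
proof -
  assume "z \<in> uhp"
  then have "Im z \<noteq> 0" "cmod z \<noteq> 0"
    by (auto simp: uhp_def)
  have norm_minus_recip: "cmod (minus_recip z) = 1 / cmod z"
    by (simp add: minus_recip_def norm_divide)
  show ?thesis
    unfolding Phi_def Re_minus_recip Im_minus_recip norm_minus_recip
    using \<open>Im z \<noteq> 0\<close> \<open>cmod z \<noteq> 0\<close> by (simp add: field_simps eval_nat_numeral)
qed

lemma continuous_on_Phi: "continuous_on uhp Phi"
  unfolding Phi_def uhp_def by (intro continuous_intros) auto

lemma open_Phi_vimage: "open T \<Longrightarrow> open {z \<in> uhp. Phi z \<in> T}"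
  using continuous_open_preimage[OF continuous_on_Phi open_uhp] by (simp add: vimage_def Int_def)

lemma expanding_Phi_horizontal:
  assumes "y > 0"
  shows "expanding ((1 + y^2)^2 / y^3) (\<lambda>x. Phi (Complex x y))"
  unfolding expanding_def Phi_Complex
proof (intro allI impI)
  fix a b :: real assume "a \<le> b"
  define A where "A = 1 + y^2"
  have expand: "x * (1 + x^2 + y^2)^2 = A^2 * x + 2 * A * x^3 + x^5" for x
    unfolding A_def by algebra
  have "a^3 \<le> b^3" "a^5 \<le> b^5"
    using \<open>a \<le> b\<close> by (simp_all add: power_mono_odd)
  moreover have "0 \<le> 2 * A"
    by (simp add: A_def)
  ultimately have "2 * A * a^3 + a^5 \<le> 2 * A * b^3 + b^5"
    by (intro add_mono mult_left_mono)
  then have "A^2 * (b - a) \<le> b * (1 + b^2 + y^2)^2 - a * (1 + a^2 + y^2)^2"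
    unfolding expand by (simp add: algebra_simps)
  then have "A^2 * (b - a) / y^3 \<le> (b * (1 + b^2 + y^2)^2 - a * (1 + a^2 + y^2)^2) / y^3"
    using assms by (intro divide_right_mono) auto
  then show "(1 + y^2)^2 / y^3 * (b - a) \<le> b * (1 + b^2 + y^2)^2 / y^3 - a * (1 + a^2 + y^2)^2 / y^3"
    by (simp add: A_def diff_divide_distrib)
qed

lemma continuous_on_Phi_horizontal: "y > 0 \<Longrightarrow> continuous_on UNIV (\<lambda>x. Phi (Complex x y))"
  unfolding Phi_Complex by (intro continuous_intros) auto

lemma closure_Phi_vimage:
  assumes "z \<in> uhp" "Phi z \<in> closure T"
  shows "z \<in> closure {p \<in> uhp. Phi p \<in> T}"
  unfolding closure_approachable
proof (intro allI impI)
  fix e :: real assume "e > 0"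
  define y where "y = Im z"
  define L where "L = (1 + y^2)^2 / y^3"
  have "y > 0"
    using assms(1) by (simp add: y_def uhp_def)
  then have "L > 0"
    unfolding L_def by (intro divide_pos_pos zero_less_power add_pos_nonneg) auto
  have "ball (Phi (Complex (Re z) y)) (L * (e / 2)) \<subseteq> (\<lambda>x. Phi (Complex x y)) ` cball (Re z) (e / 2)"
    unfolding L_def using \<open>e > 0\<close> \<open>y > 0\<close>
    by (intro expanding_ball_subset_image expanding_Phi_horizontal continuous_on_Phi_horizontal) auto
  then have "ball (Phi z) (L * (e / 2)) \<subseteq> (\<lambda>x. Phi (Complex x y)) ` cball (Re z) (e / 2)"
    by (simp add: y_def)
  moreover have "L * (e / 2) > 0"
    using \<open>L > 0\<close> \<open>e > 0\<close> by simp
  then obtain t where "t \<in> T" "dist t (Phi z) < L * (e / 2)"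
    using assms(2) unfolding closure_approachable by blast
  ultimately obtain x where x: "dist (Re z) x \<le> e / 2" "Phi (Complex x y) = t"
    by (auto simp: dist_commute)
  have "dist (Complex x y) z = dist x (Re z)"
    by (simp add: dist_norm cmod_def y_def dist_real_def)
  then have "dist (Complex x y) z < e"
    using x(1) \<open>e > 0\<close> by (simp add: dist_commute)
  moreover have "Complex x y \<in> uhp"
    using \<open>y > 0\<close> by (simp add: uhp_def)
  ultimately show "\<exists>p\<in>{p \<in> uhp. Phi p \<in> T}. dist p z < e"
    using x(2) \<open>t \<in> T\<close> by blast
qed

section \<open>Hyperbolic area\<close>

lemma lborel_distr_Complex:
  "distr lborel borel (\<lambda>p. Complex (fst p) (snd p)) = (lborel :: complex measure)"
proof (rule lborel_eqI[symmetric])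
  fix l u :: complex
  assume lu: "\<And>b. b \<in> Basis \<Longrightarrow> l \<bullet> b \<le> u \<bullet> b"
  have le: "Re l \<le> Re u" "Im l \<le> Im u"
    using lu[of 1] lu[of \<i>] by (auto simp: Basis_complex_def)
  have meas: "(\<lambda>p. Complex (fst p) (snd p)) \<in> borel_measurable borel"
    by (intro borel_measurable_continuous_onI continuous_intros)
  have "(\<lambda>p. Complex (fst p) (snd p)) -` box l u = box (Re l) (Re u) \<times> box (Im l) (Im u)"
    by (auto simp: box_def Basis_complex_def inner_complex_def)
  then have "emeasure (distr lborel borel (\<lambda>p. Complex (fst p) (snd p))) (box l u)
      = emeasure (lborel \<Otimes>\<^sub>M lborel) (box (Re l) (Re u) \<times> box (Im l) (Im u))"
    using meas by (simp add: emeasure_distr lborel_prod)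
  also have "\<dots> = ennreal ((Re u - Re l) * (Im u - Im l))"
    using le by (simp add: lborel.emeasure_pair_measure_Times ennreal_mult)
  also have "(Re u - Re l) * (Im u - Im l) = (\<Prod>b\<in>Basis. (u - l) \<bullet> b)"
    by (simp add: Basis_complex_def inner_complex_def)
  finally show "emeasure (distr lborel borel (\<lambda>p. Complex (fst p) (snd p))) (box l u)
      = (\<Prod>b\<in>Basis. (u - l) \<bullet> b)" .
qed simp

lemma emeasure_hyp_area_slices:
  assumes A: "A \<in> sets borel" "A \<subseteq> uhp"
  shows "emeasure hyp_area A =
    (\<integral>\<^sup>+ y. ennreal (1 / y^2) * emeasure lborel {x. Complex x y \<in> A} \<partial>lborel)"
proof -
  define \<rho> :: "complex \<Rightarrow> ennreal" where
    "\<rho> z = (if Im z > 0 then ennreal (1 / (Im z)^2) else 0)" for z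
  define C :: "real \<times> real \<Rightarrow> complex" where "C p = Complex (fst p) (snd p)" for p
  have [measurable]: "\<rho> \<in> borel_measurable borel"
    unfolding \<rho>_def by measurable
  have [measurable]: "C \<in> borel_measurable borel"
    unfolding C_def by (intro borel_measurable_continuous_onI continuous_intros)
  have [measurable]: "A \<in> sets borel"
    by (rule A(1))
  have slice: "(\<integral>\<^sup>+ x. \<rho> (Complex x y) * indicator A (Complex x y) \<partial>lborel)
      = ennreal (1 / y^2) * emeasure lborel {x. Complex x y \<in> A}" for y
  proof (cases "y > 0")
    case True
    have "(\<lambda>x. Complex x y) \<in> borel_measurable borel"
      by (intro borel_measurable_continuous_onI continuous_intros)
    then have "{x. Complex x y \<in> A} \<in> sets lborel"
      using measurable_sets[OF _ A(1), of "\<lambda>x. Complex x y" borel] by (simp add: vimage_def)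
    moreover have "(\<integral>\<^sup>+ x. \<rho> (Complex x y) * indicator A (Complex x y) \<partial>lborel)
        = (\<integral>\<^sup>+ x. ennreal (1 / y^2) * indicator {x. Complex x y \<in> A} x \<partial>lborel)"
      using True by (intro nn_integral_cong) (simp add: \<rho>_def indicator_def)
    ultimately show ?thesis
      by (simp add: nn_integral_cmult_indicator)
  next
    case False
    then have "{x. Complex x y \<in> A} = {}"
      using A(2) by (auto simp: uhp_def)
    with False show ?thesis
      by (simp add: \<rho>_def)
  qed
  have "emeasure hyp_area A = (\<integral>\<^sup>+ z. \<rho> z * indicator A z \<partial>lborel)"
    unfolding hyp_area_def \<rho>_def using A(1) by (simp add: emeasure_density)
  also have "\<dots> = (\<integral>\<^sup>+ p. \<rho> (C p) * indicator A (C p) \<partial>(lborel \<Otimes>\<^sub>M lborel))"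
    using A(1) by (simp add: lborel_distr_Complex[folded C_def, symmetric] nn_integral_distr lborel_prod)
  also have "\<dots> = (\<integral>\<^sup>+ y. \<integral>\<^sup>+ x. \<rho> (C (x, y)) * indicator A (C (x, y)) \<partial>lborel \<partial>lborel)"
    by (rule lborel_pair.nn_integral_snd[symmetric]) (simp add: lborel_prod)
  finally show ?thesis
    by (simp add: C_def slice)
qed

lemma emeasure_lborel_greaterThan: "emeasure lborel {a::real<..} = \<infinity>"
proof -
  have "ennreal (real n) \<le> emeasure lborel {a<..}" for n
  proof -
    have "ennreal (real n) = emeasure lborel {a<..<a + real n}"
      by simp
    also have "\<dots> \<le> emeasure lborel {a<..}"
      by (intro emeasure_mono) auto
    finally show ?thesis .
  qed
  then have "(SUP n. of_nat n :: ennreal) \<le> emeasure lborel {a<..}"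
    by (intro SUP_least) (simp add: ennreal_of_nat_eq_real_of_nat)
  then show ?thesis
    by (simp add: ennreal_SUP_of_nat_eq_top top_unique)
qed

lemma emeasure_hyp_area_right_half: "emeasure hyp_area {z \<in> uhp. Re z > 0} = \<infinity>"
proof -
  have "{z \<in> uhp. Re z > 0} \<in> sets borel"
    unfolding uhp_def by measurable
  then have "emeasure hyp_area {z \<in> uhp. Re z > 0}
      = (\<integral>\<^sup>+ y. ennreal (1 / y^2) * emeasure lborel {x. Complex x y \<in> {z \<in> uhp. Re z > 0}} \<partial>lborel)"
    by (rule emeasure_hyp_area_slices) auto
  also have "\<dots> = (\<integral>\<^sup>+ y. \<infinity> * indicator {0::real<..} y \<partial>lborel)"
  proof -
    have "{x. Complex x y \<in> {z \<in> uhp. Re z > 0}} = (if y > 0 then {0<..} else {})" for y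
      by (auto simp: uhp_def)
    then have "ennreal (1 / y^2) * emeasure lborel {x. Complex x y \<in> {z \<in> uhp. Re z > 0}}
        = \<infinity> * indicator {0<..} y" for y
      by (simp add: emeasure_lborel_greaterThan ennreal_mult_top)
    then show ?thesis
      by simp
  qed
  also have "\<dots> = \<infinity>"
    by (simp add: nn_integral_cmult_indicator emeasure_lborel_greaterThan)
  finally show ?thesis .
qed

lemma nn_integral_inverse_1_plus_square_finite:
  "(\<integral>\<^sup>+ y. ennreal (inverse (1 + y^2)) \<partial>lborel) < \<infinity>"
proof -
  have "integrable lborel (\<lambda>y::real. inverse (1 + y^2))"
    using integrable_inverse_1_plus_square by (simp add: set_integrable_def einterval_def)
  then show ?thesis
    by (simp add: integrable_iff_bounded add_pos_nonneg)
qed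


lemma emeasure_Phi_horizontal_vimage_sym_rat_cover:
  assumes "y > 0"
  shows "ennreal (1 / y^2) * emeasure lborel {x. Phi (Complex x y) \<in> sym_rat_cover}
    \<le> 16 * ennreal (inverse (1 + y^2))"
proof -
  have "0 < (1 + y^2)^2 / y^3"
    using assms by (intro divide_pos_pos zero_less_power add_pos_nonneg) auto
  then have "emeasure lborel {x. Phi (Complex x y) \<in> sym_rat_cover} \<le> ennreal (16 / ((1 + y^2)^2 / y^3))"
    using emeasure_expanding_vimage_sym_rat_cover[OF expanding_Phi_horizontal[OF assms]
        _ continuous_on_Phi_horizontal[OF assms]] by (simp add: vimage_def)
  then have "ennreal (1 / y^2) * emeasure lborel {x. Phi (Complex x y) \<in> sym_rat_cover}
      \<le> ennreal (1 / y^2) * ennreal (16 / ((1 + y^2)^2 / y^3))"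
    by (rule mult_left_mono) simp
  also have "\<dots> = ennreal (16 * (y / (1 + y^2)^2))"
    using assms by (simp add: ennreal_mult[symmetric] field_simps power2_eq_square power3_eq_cube)
  also have "\<dots> \<le> ennreal (16 * inverse (1 + y^2))"
  proof -
    have "0 \<le> (y - 1)^2"
      by simp
    then have "y \<le> 1 + y^2"
      using assms by (simp add: power2_diff)
    then have "y / (1 + y^2)^2 \<le> inverse (1 + y^2)"
      by (simp add: power2_eq_square divide_simps add_pos_nonneg)
    then show ?thesis
      by simp
  qed
  also have "\<dots> = 16 * ennreal (inverse (1 + y^2))"
    by (simp add: ennreal_mult' add_pos_nonneg)
  finally show ?thesis .
qed

lemma emeasure_hyp_area_Phi_vimage: "emeasure hyp_area {z \<in> uhp. Phi z \<in> sym_rat_cover} < \<infinity>"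
proof -
  have "emeasure hyp_area {z \<in> uhp. Phi z \<in> sym_rat_cover}
      = (\<integral>\<^sup>+ y. ennreal (1 / y^2) * emeasure lborel {x. Complex x y \<in> {z \<in> uhp. Phi z \<in> sym_rat_cover}} \<partial>lborel)"
    using open_Phi_vimage[OF open_sym_rat_cover] by (intro emeasure_hyp_area_slices) auto
  also have "\<dots> \<le> (\<integral>\<^sup>+ y. 16 * ennreal (inverse (1 + y^2)) \<partial>lborel)"
  proof (intro nn_integral_mono)
    fix y :: real
    show "ennreal (1 / y^2) * emeasure lborel {x. Complex x y \<in> {z \<in> uhp. Phi z \<in> sym_rat_cover}}
        \<le> 16 * ennreal (inverse (1 + y^2))"
      using emeasure_Phi_horizontal_vimage_sym_rat_cover[of y] by (cases "y > 0") (auto simp: uhp_def)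
  qed
  also have "\<dots> < \<infinity>"
    using nn_integral_inverse_1_plus_square_finite by (simp add: nn_integral_cmult ennreal_mult_less_top)
  finally show ?thesis .
qed

section \<open>The two fundamental domains\<close>

lemma interior_closure_Int_closure_eq_empty:
  assumes "open T" "S \<inter> T = {}"
  shows "interior (closure S) \<inter> closure T = {}"
proof -
  have "T \<inter> closure S = {}"
    using open_Int_closure_eq_empty[OF assms(1)] assms(2) by blast
  then have "interior (closure S) \<inter> T = {}"
    using interior_subset by blast
  then show ?thesis
    using open_Int_closure_eq_empty[OF open_interior] by blast
qed

definition osc_Phi :: "complex \<Rightarrow> real" where
  "osc_Phi z = osc_infdist (- sym_rat_cover) (Phi z)"

lemma continuous_on_osc_Phi: "continuous_on uhp osc_Phi"
  unfolding osc_Phi_def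
  using continuous_on_compose2[OF continuous_at_imp_continuous_on[OF ballI[OF isCont_osc_infdist]]
      continuous_on_Phi] by blast

lemma fund_conditions_osc_Phi:
  "fund_conditions minus_recip_group (uhp \<inter> interior (closure {z \<in> uhp. osc_Phi z > 0}))"
proof (rule fund_conditions_sign_change[OF continuous_on_osc_Phi])
  show "osc_Phi (minus_recip z) < 0 \<longleftrightarrow> osc_Phi z > 0" if "z \<in> uhp" for z
    using that by (simp add: osc_Phi_def Phi_minus_recip osc_infdist_uminus compl_sym_rat_cover)
  show "uhp \<subseteq> closure {z \<in> uhp. osc_Phi z \<noteq> 0}"
    using closure_Phi_vimage[of _ "{s. osc_infdist (- sym_rat_cover) s \<noteq> 0}"]
      closure_osc_infdist_nonzero[OF compl_sym_rat_cover(1-3)] by (auto simp: osc_Phi_def)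
qed

lemma interior_closure_osc_Phi_subset:
  "uhp \<inter> interior (closure {z \<in> uhp. osc_Phi z > 0}) \<subseteq> {z \<in> uhp. Phi z \<in> sym_rat_cover}"
proof -
  have "open {z \<in> uhp. osc_Phi z < 0}"
    using continuous_open_preimage[OF continuous_on_osc_Phi open_uhp, of "{..<0}"]
    by (simp add: vimage_def Int_def)
  then have "interior (closure {z \<in> uhp. osc_Phi z > 0}) \<inter> closure {z \<in> uhp. osc_Phi z < 0} = {}"
    by (intro interior_closure_Int_closure_eq_empty) auto
  moreover have "{z \<in> uhp. Phi z \<notin> sym_rat_cover} \<subseteq> closure {z \<in> uhp. osc_Phi z < 0}"
    using closure_Phi_vimage[of _ "{s. osc_infdist (- sym_rat_cover) s < 0}"]
      subset_closure_osc_infdist_neg[OF compl_sym_rat_cover(1,3,4)] by (auto simp: osc_Phi_def)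
  ultimately show ?thesis
    by blast
qed

lemma emeasure_hyp_area_interior_closure_right_half:
  "emeasure hyp_area (uhp \<inter> interior (closure {z \<in> uhp. Re z > 0})) = \<infinity>"
proof -
  have "open {z \<in> uhp. Re z > 0}"
    using open_Int[OF open_uhp open_halfspace_Re_gt[of 0]] by (simp add: Int_def)
  then have "{z \<in> uhp. Re z > 0} \<subseteq> uhp \<inter> interior (closure {z \<in> uhp. Re z > 0})"
    using interior_maximal[OF closure_subset] by auto
  then have "emeasure hyp_area {z \<in> uhp. Re z > 0}
      \<le> emeasure hyp_area (uhp \<inter> interior (closure {z \<in> uhp. Re z > 0}))"
    using open_uhp by (intro emeasure_mono) (auto simp: hyp_area_def)
  then show ?thesis
    by (simp add: emeasure_hyp_area_right_half top_unique)
qed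

lemma emeasure_hyp_area_interior_closure_osc_Phi:
  "emeasure hyp_area (uhp \<inter> interior (closure {z \<in> uhp. osc_Phi z > 0})) < \<infinity>"
proof -
  have "emeasure hyp_area (uhp \<inter> interior (closure {z \<in> uhp. osc_Phi z > 0}))
      \<le> emeasure hyp_area {z \<in> uhp. Phi z \<in> sym_rat_cover}"
    using interior_closure_osc_Phi_subset open_Phi_vimage[OF open_sym_rat_cover]
    by (intro emeasure_mono) (auto simp: hyp_area_def)
  then show ?thesis
    using emeasure_hyp_area_Phi_vimage by (rule le_less_trans)
qed

theorem proposition2:
  shows "\<exists>\<Gamma> F1 F2. fuchsian \<Gamma> \<and>
           emeasure hyp_area F1 \<noteq> emeasure hyp_area F2 \<and>
           fund_conditions \<Gamma> F1 \<and> fund_conditions \<Gamma> F2"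
proof -
  let ?F1 = "uhp \<inter> interior (closure {z \<in> uhp. Re z > 0})"
  let ?F2 = "uhp \<inter> interior (closure {z \<in> uhp. osc_Phi z > 0})"
  have "emeasure hyp_area ?F1 \<noteq> emeasure hyp_area ?F2"
    using emeasure_hyp_area_interior_closure_right_half emeasure_hyp_area_interior_closure_osc_Phi
    by simp
  then show ?thesis
    using fuchsian_minus_recip_group fund_conditions_right_half fund_conditions_osc_Phi by blast
qed

end
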